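(* Let $G$ be a simple connected graph and let $v$ be a real eigenvector of $\mathcal M$ with $\mathcal Mv=\mu v$, $\mu>0$. Let $S=\{i: v_i\ge0\}$ and let $\theta\in[0,\pi/2)$ be the angle between $|v|=(|v_1|,\dots,|v_n|)^{\mathsf T}$ and $\delta$. If $\mu>\tan^2\theta$, then $Q(S)>0$.
   Context: $G=(V,E)$ is a finite, undirected, unweighted, simple connected graph with adjacency matrix $A$, degrees $d_i$, $D=\mathrm{Diag}(d_i)$, $\delta=(\sqrt{d_1},\dots,\sqrt{d_n})^{\mathsf T}$, $\mathrm{vol}\, S=\sum_{i\in S}d_i$, $\mathbb 1_S$ the characteristic vector of $S$. $\mathcal M=D^{-1/2}AD^{-1/2}-\frac{1}{\mathrm{vol}\, V}\delta\delta^{\mathsf T}$. The modularity of $S$ is $Q(S)=\mathbb 1_S^{\mathsf T}A\mathbb 1_S-(\mathrm{vol}\, S)^2/\mathrm{vol}\, V$. *)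

theory Defs
  imports "HOL-Analysis.Analysis"
begin

definition simple_graph :: "'a set \<Rightarrow> ('a \<Rightarrow> 'a \<Rightarrow> bool) \<Rightarrow> bool" where
  "simple_graph V E \<longleftrightarrow> finite V \<and> V \<noteq> {} \<and>
     (\<forall>x y. E x y \<longrightarrow> x \<in> V \<and> y \<in> V) \<and>
     (\<forall>x y. E x y \<longrightarrow> E y x) \<and> (\<forall>x. \<not> E x x)"

definition connected_graph :: "'a set \<Rightarrow> ('a \<Rightarrow> 'a \<Rightarrow> bool) \<Rightarrow> bool" where
  "connected_graph V E \<longleftrightarrow> (\<forall>x\<in>V. \<forall>y\<in>V. E\<^sup>*\<^sup>* x y)"

definition adj :: "('a \<Rightarrow> 'a \<Rightarrow> bool) \<Rightarrow> 'a \<Rightarrow> 'a \<Rightarrow> real" where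
  "adj E i j = (if E i j then 1 else 0)"

definition degree :: "'a set \<Rightarrow> ('a \<Rightarrow> 'a \<Rightarrow> bool) \<Rightarrow> 'a \<Rightarrow> real" where
  "degree V E i = (\<Sum>j\<in>V. adj E i j)"

definition vol :: "'a set \<Rightarrow> ('a \<Rightarrow> 'a \<Rightarrow> bool) \<Rightarrow> 'a set \<Rightarrow> real" where
  "vol V E S = (\<Sum>i\<in>S. degree V E i)"

definition delta :: "'a set \<Rightarrow> ('a \<Rightarrow> 'a \<Rightarrow> bool) \<Rightarrow> 'a \<Rightarrow> real" where
  "delta V E i = sqrt (degree V E i)"

definition modmat :: "'a set \<Rightarrow> ('a \<Rightarrow> 'a \<Rightarrow> bool) \<Rightarrow> 'a \<Rightarrow> 'a \<Rightarrow> real" where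
  "modmat V E i j = adj E i j / (delta V E i * delta V E j)
      - delta V E i * delta V E j / vol V E V"

definition modularity :: "'a set \<Rightarrow> ('a \<Rightarrow> 'a \<Rightarrow> bool) \<Rightarrow> 'a set \<Rightarrow> real" where
  "modularity V E S = (\<Sum>i\<in>S. \<Sum>j\<in>S. adj E i j) - (vol V E S)^2 / vol V E V"

definition vinner :: "'a set \<Rightarrow> ('a \<Rightarrow> real) \<Rightarrow> ('a \<Rightarrow> real) \<Rightarrow> real" where
  "vinner V x y = (\<Sum>i\<in>V. x i * y i)"

definition vnorm :: "'a set \<Rightarrow> ('a \<Rightarrow> real) \<Rightarrow> real" where
  "vnorm V x = sqrt (vinner V x x)"

definition vangle :: "'a set \<Rightarrow> ('a \<Rightarrow> real) \<Rightarrow> ('a \<Rightarrow> real) \<Rightarrow> real" where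
  "vangle V x y = arccos (vinner V x y / (vnorm V x * vnorm V y))"

end

theory Submission
  imports Defs
begin

(* With s = D^(1/2) 1_S one has Q(S) = s^T M s.  The matrix M kills delta, has v as an
   eigenvector, and is >= -I on the complement of delta because the normalised adjacency
   matrix is.  Splitting s along delta, v and the rest gives
     Q(S) >= (1 + mu) <s,v>^2 / |v|^2 - (vol S - (vol S)^2 / vol V).
   Since v is orthogonal to delta, <s,v> = <|v|,delta> / 2, so the first term equals
   (1 + mu) cos^2 theta vol V / 4, while the second is at most vol V / 4; and
   mu > tan^2 theta says exactly (1 + mu) cos^2 theta > 1. *)

definition bilin :: "'a set \<Rightarrow> ('a \<Rightarrow> 'a \<Rightarrow> real) \<Rightarrow> ('a \<Rightarrow> real) \<Rightarrow> ('a \<Rightarrow> real) \<Rightarrow> real" where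
  "bilin V M x y = (\<Sum>i\<in>V. \<Sum>j\<in>V. M i j * x i * y j)"

lemma vinner_commute: "vinner V x y = vinner V y x"
  unfolding vinner_def by (simp add: mult.commute)

lemma vinner_diff_left: "vinner V (\<lambda>i. x i - y i) z = vinner V x z - vinner V y z"
  unfolding vinner_def by (simp add: left_diff_distrib sum_subtractf)

lemma vinner_diff_right: "vinner V z (\<lambda>i. x i - y i) = vinner V z x - vinner V z y"
  unfolding vinner_def by (simp add: right_diff_distrib sum_subtractf)

lemma vinner_scale_left: "vinner V (\<lambda>i. c * x i) z = c * vinner V x z"
  unfolding vinner_def by (simp add: sum_distrib_left mult.assoc)

lemma vinner_scale_right: "vinner V z (\<lambda>i. c * x i) = c * vinner V z x"
  unfolding vinner_def by (simp add: sum_distrib_left mult.left_commute)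

lemma bilin_diff_left: "bilin V M (\<lambda>i. x i - y i) z = bilin V M x z - bilin V M y z"
  unfolding bilin_def by (simp add: algebra_simps sum_subtractf)

lemma bilin_diff_right: "bilin V M z (\<lambda>i. x i - y i) = bilin V M z x - bilin V M z y"
  unfolding bilin_def by (simp add: algebra_simps sum_subtractf)

lemma bilin_scale_left: "bilin V M (\<lambda>i. c * x i) z = c * bilin V M x z"
  unfolding bilin_def by (simp add: sum_distrib_left mult_ac)

lemma bilin_scale_right: "bilin V M z (\<lambda>i. c * x i) = c * bilin V M z x"
  unfolding bilin_def by (simp add: sum_distrib_left mult_ac)

lemma bilin_eq_vinner: "bilin V M x y = vinner V x (\<lambda>i. \<Sum>j\<in>V. M i j * y j)"
  unfolding bilin_def vinner_def by (simp add: sum_distrib_left mult_ac)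

lemma bilin_commute:
  assumes "\<And>i j. M i j = M j i"
  shows "bilin V M x y = bilin V M y x"
  unfolding bilin_def by (subst sum.swap) (simp add: assms mult_ac)

lemma bilin_eigenvector:
  assumes "\<And>i. i \<in> V \<Longrightarrow> (\<Sum>j\<in>V. M i j * v j) = \<mu> * v i"
  shows "bilin V M x v = \<mu> * vinner V x v"
proof -
  have "bilin V M x v = (\<Sum>i\<in>V. x i * (\<mu> * v i))"
    unfolding bilin_eq_vinner vinner_def by (rule sum.cong) (simp_all add: assms)
  then show ?thesis by (simp add: vinner_def sum_distrib_left mult_ac)
qed

text \<open>Write \<open>s = a d + t v + r\<close> with \<open>r \<bottom> d, v\<close>; then \<open>s\<^sup>T M s = \<mu> t\<^sup>2 |v|\<^sup>2 + r\<^sup>T M r\<close>,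
  and the bound \<open>r\<^sup>T M r \<ge> -|r|\<^sup>2\<close> on \<open>d\<^sup>\<bottom>\<close> gives the claim.\<close>
lemma bilin_self_lower_bound:
  fixes M :: "'a \<Rightarrow> 'a \<Rightarrow> real"
  assumes M_sym: "\<And>i j. M i j = M j i"
    and eig: "\<And>i. i \<in> V \<Longrightarrow> (\<Sum>j\<in>V. M i j * v j) = \<mu> * v i"
    and ker: "\<And>i. i \<in> V \<Longrightarrow> (\<Sum>j\<in>V. M i j * d j) = 0"
    and lower: "\<And>x. vinner V x d = 0 \<Longrightarrow> bilin V M x x \<ge> - vinner V x x"
    and vd: "vinner V v d = 0" and v_pos: "vinner V v v > 0" and d_pos: "vinner V d d > 0"
  shows "bilin V M s s \<ge> (1 + \<mu>) * (vinner V s v)\<^sup>2 / vinner V v v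
            - (vinner V s s - (vinner V s d)\<^sup>2 / vinner V d d)"
proof -
  define a where "a = vinner V s d / vinner V d d"
  define t where "t = vinner V s v / vinner V v v"
  define r where "r = (\<lambda>i. s i - a * d i - t * v i)"
  have Mv: "bilin V M x v = \<mu> * vinner V x v" for x by (rule bilin_eigenvector[OF eig])
  have Md: "bilin V M x d = 0" for x using bilin_eigenvector[of V M d 0 x] ker by simp
  have rd: "vinner V r d = 0"
    using d_pos vd unfolding r_def vinner_diff_left vinner_scale_left
    by (simp add: a_def vinner_commute[of V v])
  have rv: "vinner V r v = 0"
    using v_pos vd unfolding r_def vinner_diff_left vinner_scale_left
    by (simp add: t_def vinner_commute[of V d])
  have "bilin V M r r = bilin V M r s"
    using rv by (simp add: r_def bilin_diff_right bilin_scale_right Mv Md)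
  also have "\<dots> = bilin V M s s - t * \<mu> * vinner V s v"
    using bilin_commute[OF M_sym, where x = d and y = s] bilin_commute[OF M_sym, where x = v and y = s]
    by (simp add: r_def bilin_diff_left bilin_scale_left Mv Md)
  finally have rMr: "bilin V M r r = bilin V M s s - \<mu> * (vinner V s v)\<^sup>2 / vinner V v v"
    by (simp add: t_def power2_eq_square)
  have "vinner V r r = vinner V r s"
    using rd rv by (simp add: r_def vinner_diff_right vinner_scale_right)
  also have "\<dots> = vinner V s s - a * vinner V d s - t * vinner V v s"
    by (simp add: r_def vinner_diff_left vinner_scale_left)
  finally have rr: "vinner V r r = vinner V s s - (vinner V s d)\<^sup>2 / vinner V d d
                                  - (vinner V s v)\<^sup>2 / vinner V v v"
    by (simp add: a_def t_def power2_eq_square vinner_commute)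
  show ?thesis
    using lower[OF rd] rMr rr by (simp add: algebra_simps add_divide_distrib diff_divide_distrib)
qed

lemma diff_sq_div_le_quarter:
  fixes x W :: real
  assumes "W > 0"
  shows "x - x\<^sup>2 / W \<le> W / 4"
proof -
  have "0 \<le> (W - 2 * x)\<^sup>2 / (4 * W)" using assms by simp
  also have "\<dots> = W / 4 - (x - x\<^sup>2 / W)" using assms by (simp add: field_simps power2_eq_square)
  finally show ?thesis by simp
qed

lemma tan_arccos_sq:
  assumes "0 < c" "c \<le> 1"
  shows "(tan (arccos c))\<^sup>2 = (1 - c\<^sup>2) / c\<^sup>2"
proof -
  have "c\<^sup>2 \<le> 1" using assms by (simp add: abs_square_le_1)
  then show ?thesis using assms by (simp add: tan_def sin_arccos power_divide)
qed

lemma tan_vangle_sq: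
  assumes "finite V" and q_pos: "vinner V x y > 0"
  shows "(tan (vangle V x y))\<^sup>2
           = (vinner V x x * vinner V y y - (vinner V x y)\<^sup>2) / (vinner V x y)\<^sup>2"
proof -
  define q where "q = vinner V x y"
  define n where "n = vinner V x x * vinner V y y"
  have cauchy_schwarz: "q\<^sup>2 \<le> n"
    unfolding q_def n_def vinner_def power2_eq_square[symmetric] by (rule Cauchy_Schwarz_ineq_sum)
  have "0 < q\<^sup>2" using q_pos by (simp add: q_def)
  with cauchy_schwarz have n_pos: "n > 0" by linarith
  define c where "c = q / sqrt n"
  have vangle: "vangle V x y = arccos c"
    unfolding vangle_def vnorm_def c_def q_def n_def real_sqrt_mult ..
  have c_sq: "c\<^sup>2 = q\<^sup>2 / n" using n_pos by (simp add: c_def power_divide)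
  have "0 < c" using q_pos n_pos by (simp add: c_def q_def)
  have "c\<^sup>2 \<le> 1\<^sup>2" using c_sq cauchy_schwarz n_pos by simp
  then have "c \<le> 1" by (rule power2_le_imp_le) simp
  with \<open>0 < c\<close> have "(tan (vangle V x y))\<^sup>2 = (1 - q\<^sup>2 / n) / (q\<^sup>2 / n)"
    by (simp add: vangle tan_arccos_sq c_sq)
  also have "\<dots> = (n - q\<^sup>2) / q\<^sup>2" using n_pos \<open>0 < q\<^sup>2\<close> by (simp add: field_simps)
  finally show ?thesis by (simp add: q_def n_def)
qed

lemma adj_nonneg: "0 \<le> adj E i j"
  by (simp add: adj_def)

lemma adj_commute: "simple_graph V E \<Longrightarrow> adj E i j = adj E j i"
  unfolding simple_graph_def adj_def by metis

lemma degree_nonneg: "0 \<le> degree V E i"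
  unfolding degree_def by (simp add: sum_nonneg adj_nonneg)

lemma delta_nonneg: "0 \<le> delta V E i"
  by (simp add: delta_def degree_nonneg)

lemma delta_mult_self: "delta V E i * delta V E i = degree V E i"
  by (simp add: delta_def degree_nonneg)

text \<open>The normalised adjacency matrix is bounded below by \<open>-I\<close>: the defect is
  \<open>\<Sum>\<^sub>i\<^sub>j a\<^sub>i\<^sub>j (y\<^sub>i + y\<^sub>j)\<^sup>2 \<ge> 0\<close>.\<close>
lemma adjacency_form_ge:
  assumes "simple_graph V E"
  shows "(\<Sum>i\<in>V. \<Sum>j\<in>V. adj E i j * y i * y j) \<ge> - (\<Sum>i\<in>V. degree V E i * (y i)\<^sup>2)"
proof -
  have row: "(\<Sum>i\<in>V. \<Sum>j\<in>V. adj E i j * (y i)\<^sup>2) = (\<Sum>i\<in>V. degree V E i * (y i)\<^sup>2)"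
    unfolding degree_def by (simp add: sum_distrib_right)
  have col: "(\<Sum>i\<in>V. \<Sum>j\<in>V. adj E i j * (y j)\<^sup>2) = (\<Sum>i\<in>V. degree V E i * (y i)\<^sup>2)"
    using row by (subst sum.swap) (simp add: adj_commute[OF assms])
  have "0 \<le> (\<Sum>i\<in>V. \<Sum>j\<in>V. adj E i j * (y i + y j)\<^sup>2)"
    by (intro sum_nonneg) (simp add: adj_nonneg)
  also have "\<dots> = (\<Sum>i\<in>V. \<Sum>j\<in>V. adj E i j * (y i)\<^sup>2)
      + 2 * (\<Sum>i\<in>V. \<Sum>j\<in>V. adj E i j * y i * y j) + (\<Sum>i\<in>V. \<Sum>j\<in>V. adj E i j * (y j)\<^sup>2)"
    by (simp add: power2_eq_square algebra_simps sum.distrib sum_distrib_left)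
  finally show ?thesis using row col by simp
qed

lemma degree_zero_connected_singleton:
  assumes sg: "simple_graph V E" and cg: "connected_graph V E"
    and i: "i \<in> V" and d0: "degree V E i = 0"
  shows "V = {i}"
proof -
  have no_edge: "\<not> E i j" for j
  proof
    assume Eij: "E i j"
    then have "finite V" "j \<in> V" using sg by (auto simp: simple_graph_def)
    then have "adj E i j \<le> degree V E i"
      unfolding degree_def by (intro member_le_sum) (simp_all add: adj_nonneg)
    with Eij d0 show False by (simp add: adj_def)
  qed
  have "y = i" if "y \<in> V" for y
  proof -
    have "E\<^sup>*\<^sup>* i y" using cg i that by (auto simp: connected_graph_def)
    then show "y = i" by (cases rule: converse_rtranclpE) (simp_all add: no_edge)
  qed
  with i show ?thesis by blast
qed

text \<open>A single vertex has degree \<open>0\<close>, so there \<open>modmat\<close> is \<open>0\<close> by the conventions for division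
  by zero and \<open>\<mu> \<noteq> 0\<close> rules it out.\<close>
lemma degree_pos_of_modmat_eigenvector:
  assumes sg: "simple_graph V E" and cg: "connected_graph V E"
    and nz: "\<exists>i\<in>V. v i \<noteq> 0"
    and eig: "\<forall>i\<in>V. (\<Sum>j\<in>V. modmat V E i j * v j) = \<mu> * v i"
    and "\<mu> \<noteq> 0" and i: "i \<in> V"
  shows "degree V E i > 0"
proof (rule ccontr)
  assume "\<not> degree V E i > 0"
  then have d0: "degree V E i = 0" using degree_nonneg[of V E i] by simp
  then have V: "V = {i}" by (rule degree_zero_connected_singleton[OF sg cg i])
  have "modmat V E i i = 0" using d0 by (simp add: modmat_def delta_def)
  then show False using eig nz \<open>\<mu> \<noteq> 0\<close> by (simp add: V)
qed

lemma modmat_mult: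
  "modmat V E i j * x i * x j
     = adj E i j * (x i / delta V E i) * (x j / delta V E j)
       - (x i * delta V E i) * (x j * delta V E j) / vol V E V"
  by (simp add: modmat_def divide_inverse algebra_simps)

locale pos_degree_graph =
  fixes V :: "'a set" and E :: "'a \<Rightarrow> 'a \<Rightarrow> bool"
  assumes simple: "simple_graph V E"
    and degree_pos: "\<And>i. i \<in> V \<Longrightarrow> degree V E i > 0"
begin

lemma finite_V: "finite V"
  using simple by (simp add: simple_graph_def)

lemma delta_pos: "i \<in> V \<Longrightarrow> delta V E i > 0"
  by (simp add: delta_def degree_pos)

lemma delta_nonzero: "i \<in> V \<Longrightarrow> delta V E i \<noteq> 0"
  using delta_pos by fastforce

lemma vol_pos: "vol V E V > 0"
  using simple degree_pos unfolding vol_def simple_graph_def by (intro sum_pos) auto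

lemma modmat_commute: "modmat V E i j = modmat V E j i"
  by (simp add: modmat_def adj_commute[OF simple] mult.commute)

lemma vinner_delta_self: "vinner V (delta V E) (delta V E) = vol V E V"
  by (simp add: vinner_def vol_def delta_mult_self)

lemma modmat_delta: "i \<in> V \<Longrightarrow> (\<Sum>j\<in>V. modmat V E i j * delta V E j) = 0"
proof -
  assume i: "i \<in> V"
  have "(\<Sum>j\<in>V. modmat V E i j * delta V E j)
        = (\<Sum>j\<in>V. adj E i j / delta V E i - delta V E i * degree V E j / vol V E V)"
    using i delta_nonzero
    by (intro sum.cong) (simp_all add: modmat_def field_simps delta_mult_self[symmetric])
  also have "\<dots> = degree V E i / delta V E i - delta V E i"
    using vol_pos by (simp add: sum_subtractf sum_divide_distrib[symmetric] sum_distrib_left[symmetric]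
        degree_def vol_def)
  also have "\<dots> = 0"
    using delta_pos[OF i] by (simp add: field_simps delta_mult_self[symmetric])
  finally show ?thesis .
qed

lemma eigenvector_orthogonal_delta:
  assumes eig: "\<And>i. i \<in> V \<Longrightarrow> (\<Sum>j\<in>V. modmat V E i j * v j) = \<mu> * v i" and "\<mu> \<noteq> 0"
  shows "vinner V v (delta V E) = 0"
proof -
  have "\<mu> * vinner V (delta V E) v = bilin V (modmat V E) (delta V E) v"
    by (simp add: bilin_eigenvector[OF eig])
  also have "\<dots> = bilin V (modmat V E) v (delta V E)"
    by (rule bilin_commute) (rule modmat_commute)
  also have "\<dots> = 0"
    using bilin_eigenvector[of V "modmat V E" "delta V E" 0 v] modmat_delta by simp
  finally show ?thesis using \<open>\<mu> \<noteq> 0\<close> by (simp add: vinner_commute)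
qed

lemma bilin_modmat_ge:
  assumes "vinner V x (delta V E) = 0"
  shows "bilin V (modmat V E) x x \<ge> - vinner V x x"
proof -
  define y where "y i = x i / delta V E i" for i
  have "(\<Sum>i\<in>V. \<Sum>j\<in>V. (x i * delta V E i) * (x j * delta V E j)) = (vinner V x (delta V E))\<^sup>2"
    by (simp add: vinner_def power2_eq_square sum_product)
  then have "bilin V (modmat V E) x x = (\<Sum>i\<in>V. \<Sum>j\<in>V. adj E i j * y i * y j)"
    using assms by (simp add: bilin_def modmat_mult y_def sum_subtractf sum_divide_distrib[symmetric])
  moreover have "(\<Sum>i\<in>V. degree V E i * (y i)\<^sup>2) = vinner V x x"
    unfolding vinner_def y_def using delta_nonzero
    by (intro sum.cong) (simp_all add: field_simps power2_eq_square delta_mult_self[symmetric])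
  ultimately show ?thesis using adjacency_form_ge[OF simple, of y] by simp
qed

definition sqrt_degree_indicator :: "'a set \<Rightarrow> 'a \<Rightarrow> real" where
  "sqrt_degree_indicator S i = (if i \<in> S then delta V E i else 0)"

lemma sum_indicator_subset:
  "S \<subseteq> V \<Longrightarrow> (\<Sum>i\<in>V. if i \<in> S then f i else 0) = sum f S"
  by (simp add: sum.inter_restrict[OF finite_V, symmetric] Int_absorb1)

lemma modularity_eq_bilin:
  assumes "S \<subseteq> V"
  shows "modularity V E S
           = bilin V (modmat V E) (sqrt_degree_indicator S) (sqrt_degree_indicator S)"
proof -
  have entry: "modmat V E i j * sqrt_degree_indicator S i * sqrt_degree_indicator S j
      = (if i \<in> S then if j \<in> S then adj E i j - degree V E i * degree V E j / vol V E V else 0 else 0)"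
    if "i \<in> V" "j \<in> V" for i j
    using modmat_mult[of V E i j "delta V E"] that
    by (simp add: sqrt_degree_indicator_def delta_nonzero delta_mult_self)
  have "bilin V (modmat V E) (sqrt_degree_indicator S) (sqrt_degree_indicator S)
      = (\<Sum>i\<in>V. if i \<in> S then (\<Sum>j\<in>V. if j \<in> S
            then adj E i j - degree V E i * degree V E j / vol V E V else 0) else 0)"
    unfolding bilin_def by (intro sum.cong) (simp_all add: entry)
  also have "\<dots> = (\<Sum>i\<in>S. \<Sum>j\<in>S. adj E i j - degree V E i * degree V E j / vol V E V)"
    using assms by (simp add: sum_indicator_subset)
  also have "\<dots> = modularity V E S"
    by (simp add: modularity_def vol_def power2_eq_square sum_product sum_subtractf
        sum_divide_distrib)
  finally show ?thesis ..
qed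

lemma vinner_sqrt_degree_indicator_self:
  assumes "S \<subseteq> V"
  shows "vinner V (sqrt_degree_indicator S) (sqrt_degree_indicator S) = vol V E S"
proof -
  have "vinner V (sqrt_degree_indicator S) (sqrt_degree_indicator S)
      = (\<Sum>i\<in>V. if i \<in> S then degree V E i else 0)"
    unfolding vinner_def by (intro sum.cong) (simp_all add: sqrt_degree_indicator_def delta_mult_self)
  with assms show ?thesis by (simp add: sum_indicator_subset vol_def)
qed

lemma vinner_sqrt_degree_indicator_delta:
  assumes "S \<subseteq> V"
  shows "vinner V (sqrt_degree_indicator S) (delta V E) = vol V E S"
proof -
  have "vinner V (sqrt_degree_indicator S) (delta V E)
      = (\<Sum>i\<in>V. if i \<in> S then degree V E i else 0)"
    unfolding vinner_def by (intro sum.cong) (simp_all add: sqrt_degree_indicator_def delta_mult_self)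
  with assms show ?thesis by (simp add: sum_indicator_subset vol_def)
qed

lemma vinner_abs_delta:
  "vinner V (\<lambda>i. \<bar>v i\<bar>) (delta V E)
     = 2 * vinner V (sqrt_degree_indicator {i\<in>V. v i \<ge> 0}) v - vinner V v (delta V E)"
proof -
  have "vinner V (\<lambda>i. \<bar>v i\<bar>) (delta V E)
      = (\<Sum>i\<in>V. 2 * (sqrt_degree_indicator {i\<in>V. v i \<ge> 0} i * v i) - v i * delta V E i)"
    unfolding vinner_def by (intro sum.cong) (auto simp: sqrt_degree_indicator_def)
  then show ?thesis by (simp add: vinner_def sum_subtractf sum_distrib_left)
qed

lemma modularity_ge_eigenvector:
  assumes eig: "\<And>i. i \<in> V \<Longrightarrow> (\<Sum>j\<in>V. modmat V E i j * v j) = \<mu> * v i"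
    and "\<mu> \<noteq> 0" and v_pos: "vinner V v v > 0"
  shows "modularity V E {i\<in>V. v i \<ge> 0}
           \<ge> ((1 + \<mu>) * (vinner V (\<lambda>i. \<bar>v i\<bar>) (delta V E))\<^sup>2 / vinner V v v - vol V E V) / 4"
proof -
  define S where "S = {i\<in>V. v i \<ge> 0}"
  define s where "s = sqrt_degree_indicator S"
  define W where "W = vol V E V"
  define q where "q = vinner V (\<lambda>i. \<bar>v i\<bar>) (delta V E)"
  have S: "S \<subseteq> V" by (auto simp: S_def)
  have vd: "vinner V v (delta V E) = 0" by (rule eigenvector_orthogonal_delta[OF eig \<open>\<mu> \<noteq> 0\<close>])
  have bound: "bilin V (modmat V E) s s \<ge> (1 + \<mu>) * (vinner V s v)\<^sup>2 / vinner V v v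
            - (vinner V s s - (vinner V s (delta V E))\<^sup>2 / vinner V (delta V E) (delta V E))"
    using modmat_commute eig modmat_delta bilin_modmat_ge vd v_pos vinner_delta_self vol_pos
    by (intro bilin_self_lower_bound) auto
  have sv: "vinner V s v = q / 2"
    using vd by (simp add: vinner_abs_delta s_def S_def q_def)
  have "(1 + \<mu>) * (vinner V s v)\<^sup>2 / vinner V v v = (1 + \<mu>) * q\<^sup>2 / vinner V v v / 4"
    unfolding sv by (simp add: power_divide)
  with bound have "modularity V E S
      \<ge> (1 + \<mu>) * q\<^sup>2 / vinner V v v / 4 - (vol V E S - (vol V E S)\<^sup>2 / W)"
    using S by (simp add: s_def W_def modularity_eq_bilin vinner_delta_self
        vinner_sqrt_degree_indicator_self vinner_sqrt_degree_indicator_delta)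
  moreover have "vol V E S - (vol V E S)\<^sup>2 / W \<le> W / 4"
    using vol_pos unfolding W_def by (rule diff_sq_div_le_quarter)
  ultimately have "modularity V E S \<ge> ((1 + \<mu>) * q\<^sup>2 / vinner V v v - W) / 4"
    by (simp add: diff_divide_distrib)
  then show ?thesis by (simp add: S_def W_def q_def)
qed

end

theorem corollary5p3:
  fixes V :: "'a set" and E :: "'a \<Rightarrow> 'a \<Rightarrow> bool" and v :: "'a \<Rightarrow> real" and \<mu> :: real
  assumes "simple_graph V E" and "connected_graph V E"
    and "\<exists>i\<in>V. v i \<noteq> 0"
    and "\<forall>i\<in>V. (\<Sum>j\<in>V. modmat V E i j * v j) = \<mu> * v i"
    and "\<mu> > 0"
    and "\<mu> > (tan (vangle V (\<lambda>i. \<bar>v i\<bar>) (delta V E)))^2"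
  shows "modularity V E {i\<in>V. v i \<ge> 0} > 0"
proof -
  interpret pos_degree_graph V E
    using assms(1) degree_pos_of_modmat_eigenvector[OF assms(1-4)] assms(5)
    by unfold_locales auto
  obtain i0 where i0: "i0 \<in> V" "v i0 \<noteq> 0" using assms(3) by blast
  define n where "n = vinner V v v"
  define q where "q = vinner V (\<lambda>i. \<bar>v i\<bar>) (delta V E)"
  have n_pos: "n > 0"
    unfolding n_def vinner_def using i0 by (intro sum_pos2[OF finite_V]) (auto simp: zero_less_mult_iff)
  have q_pos: "q > 0"
    unfolding q_def vinner_def using i0 delta_pos by (intro sum_pos2[OF finite_V]) (auto simp: delta_nonneg)
  have "vinner V (\<lambda>i. \<bar>v i\<bar>) (\<lambda>i. \<bar>v i\<bar>) = n"
    by (simp add: n_def vinner_def abs_mult_self_eq)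
  then have "\<mu> > (n * vol V E V - q\<^sup>2) / q\<^sup>2"
    using assms(6) tan_vangle_sq[OF finite_V q_pos[unfolded q_def]]
    by (simp add: q_def vinner_delta_self)
  then have "(1 + \<mu>) * q\<^sup>2 / n - vol V E V > 0"
    using n_pos q_pos by (simp add: field_simps)
  then show ?thesis
    using modularity_ge_eigenvector[of v \<mu>] assms(4,5) n_pos by (simp add: n_def q_def)
qed

end
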